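(* Let $k\ge1$, $n\ge 2k+1$ and $x\in X_{n,k}$. Then $W(f(x))=W(x)$ as multisets; consequently $W$ is constant along the cycle $C(x)=(x,f(x),f^2(x),\dots)$.
   Context: $X_{n,k}$: binary strings of length $n$ with $k$ ones, positions cyclic mod $n$. Cyclic parenthesis matching: $1$s are opening, $0$s closing brackets; each $1$ at position $i$ is matched to the last $0$ of the shortest cyclic substring starting at $i$ going right with equally many $0$s and $1$s; all $1$s are matched and $n-2k\ge1$ zeros are unmatched. $f(x)$ is obtained from $x$ by complementing all matched bits. A block of $x$ is a maximal cyclic substring of matched bits; each block is a nonempty Dyck word. $D$ is the set of Dyck words (equally many $0$s and $1$s, at least as many $1$s as $0$s in every prefix), including $\varepsilon$; $D'=\{1\,u\,0:u\in D\}$; every nonempty $y\in D$ factors uniquely as $y=y_1\cdots y_\ell$ with $y_i\in D'$. For a nonempty multiset $X$ of positive integers, $X\oplus 1$ increases one largest element by $1$. Define: for $y=1u0\in D'$, $W(y)=\{1\}$ if $u=\varepsilon$, else $W(u)\oplus1$; for nonempty $y\in D\setminus D'$, $W(y)=\bigcup_i W(y_i)$; $W(x)=\bigcup_{y\text{ block of }x}W(y)$ (multiset unions). *)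

theory Defs
  imports Main "HOL-Library.Multiset"
begin

text \<open>Binary strings are lists of booleans; True = 1 (opening bracket), False = 0.\<close>

definition bin_strings :: "nat \<Rightarrow> nat \<Rightarrow> bool list set" where
  "bin_strings n k = {x. length x = n \<and> count_list x True = k}"

definition bal :: "bool list \<Rightarrow> int" where
  "bal xs = sum_list (map (\<lambda>b. if b then 1 else -1) xs)"

definition cyc :: "bool list \<Rightarrow> nat \<Rightarrow> nat \<Rightarrow> bool list" where
  "cyc x i j = map (\<lambda>t. x ! ((i + t) mod length x)) [0..<j]"

definition match_len :: "bool list \<Rightarrow> nat \<Rightarrow> nat" where
  "match_len x i = (LEAST j. 0 < j \<and> bal (cyc x i j) = 0)"

definition match_pos :: "bool list \<Rightarrow> nat \<Rightarrow> nat" where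
  "match_pos x i = (i + match_len x i - 1) mod length x"

definition matched :: "bool list \<Rightarrow> nat set" where
  "matched x = {i. i < length x \<and> x ! i} \<union> {match_pos x i | i. i < length x \<and> x ! i}"

definition f :: "bool list \<Rightarrow> bool list" where
  "f x = map (\<lambda>i. if i \<in> matched x then \<not> x ! i else x ! i) [0..<length x]"

fun runs :: "(bool \<times> bool) list \<Rightarrow> bool list \<Rightarrow> bool list list" where
  "runs [] acc = (if acc = [] then [] else [rev acc])"
| "runs ((b, m) # ys) acc =
     (if m then runs ys (b # acc)
      else (if acc = [] then [] else [rev acc]) @ runs ys [])"

text \<open>Blocks: maximal cyclic runs of matched bits. We rotate so that the string starts
  at an unmatched position (which exists since n - 2k \<ge> 1); then cyclic runs are linear runs.\<close>
definition blocks :: "bool list \<Rightarrow> bool list list" where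
  "blocks x = (let u = (LEAST i. i < length x \<and> i \<notin> matched x) in
     runs (rotate u (zip x (map (\<lambda>i. i \<in> matched x) [0..<length x]))) [])"

definition plus_one :: "nat multiset \<Rightarrow> nat multiset" where
  "plus_one X = X - {# Max (set_mset X) #} + {# Max (set_mset X) + 1 #}"

text \<open>Length of the first prime factor in D' of a Dyck word (first return to balance 0).\<close>
definition first_return :: "bool list \<Rightarrow> nat" where
  "first_return y = (if \<exists>j. 0 < j \<and> j \<le> length y \<and> bal (take j y) = 0
     then (LEAST j. 0 < j \<and> bal (take j y) = 0) else length y)"

text \<open>W on nonempty Dyck words: for y = y_1 ... y_l (l \<ge> 2) take the union W(y_1) + W(y_2 ... y_l);
  for y = 1u0 in D' take {1} if u is empty, else W(u) \<oplus> 1.\<close>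
function Wd :: "bool list \<Rightarrow> nat multiset" where
  "Wd y = (if y = [] then {#} else
     (let j = first_return y in
      if 0 < j \<and> j < length y then Wd (take j y) + Wd (drop j y)
      else if butlast (tl y) = [] then {#1#}
      else plus_one (Wd (butlast (tl y)))))"
  by pat_completeness auto
termination
  by (relation "measure length") auto

definition W :: "bool list \<Rightarrow> nat multiset" where
  "W x = sum_list (map Wd (blocks x))"

end

theory Submission
  imports Defs
begin

text \<open>Rotate \<open>x\<close> into the form \<open>D\<^sub>1 0 D\<^sub>2 0 \<dots> D\<^sub>m 0\<close> with Dyck words \<open>D\<^sub>i\<close> (cycle lemma).
  Then the blocks of \<open>x\<close> are the \<open>D\<^sub>i\<close>, and \<open>f(x)\<close> is a rotation of the complemented string
  \<open>~D\<^sub>1 0 \<dots> ~D\<^sub>m 0\<close>, whose own blocks \<open>E\<^sub>j\<close> form a different Dyck factorisation.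
  Deleting all peaks \<open>10\<close> from a Dyck word \<open>D\<close> leaves a Dyck word \<open>D'\<close>, and \<open>W(D)\<close> arises from
  \<open>W(D')\<close> by adding 1 to every element and then adding copies of 1, as many as are needed to
  reach \<open>|W(D)|\<close>, the number of peaks of \<open>D\<close>. Deleting peaks commutes with complementing the
  blocks up to rotation, so \<open>W(E) = W(D)\<close> reduces to the same claim for \<open>D'\<close> and \<open>E'\<close>, which have
  fewer ones: induction on the number of ones.\<close>

declare Wd.simps [simp del]

abbreviation ones :: "bool list \<Rightarrow> nat" where
  "ones xs \<equiv> count_list xs True"

lemma bal_Nil [simp]: "bal [] = 0"
  by (simp add: bal_def)

lemma bal_Cons [simp]: "bal (x # xs) = (if x then 1 else -1) + bal xs"
  by (simp add: bal_def)

lemma bal_append [simp]: "bal (xs @ ys) = bal xs + bal ys"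
  by (simp add: bal_def)

lemma bal_eq_count: "bal xs = int (count_list xs True) - int (count_list xs False)"
  by (induction xs) auto

lemma count_True_add_count_False: "count_list xs True + count_list xs False = length xs"
  by (induction xs) auto

lemma count_list_rotate: "count_list (rotate r xs) a = count_list xs a"
  by (metis append_take_drop_id count_list_append add.commute rotate_drop_take)

lemma bal_rotate: "bal (rotate r xs) = bal xs"
  by (simp add: bal_eq_count count_list_rotate)

lemma count_map_Not: "count_list (map Not xs) True = count_list xs False"
  by (induction xs) auto

lemma rotate_inverse: "\<exists>s. xs = rotate s (rotate r xs)"
proof -
  have "rotate (length xs - r mod length xs) (rotate r xs) = xs"
  proof (cases "xs = []")
    case False
    have "rotate (length xs - r mod length xs) (rotate r xs)
        = rotate (length xs - r mod length xs + r mod length xs) xs"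
      by (metis rotate_conv_mod rotate_rotate)
    also have "\<dots> = xs"
      using False by simp
    finally show ?thesis .
  qed simp
  then show ?thesis
    by metis
qed

subsection \<open>Dyck words\<close>

definition dyck :: "bool list \<Rightarrow> bool" where
  "dyck D \<longleftrightarrow> bal D = 0 \<and> (\<forall>j. 0 \<le> bal (take j D))"

lemma dyck_Nil [simp]: "dyck []"
  by (simp add: dyck_def)

lemma dyck_hd: "dyck D \<Longrightarrow> D \<noteq> [] \<Longrightarrow> hd D"
proof (cases D)
  case (Cons a l)
  assume "dyck D"
  then have "0 \<le> bal (take 1 D)"
    by (simp add: dyck_def)
  then show ?thesis
    using Cons by (cases a) auto
qed simp

lemma dyck_last: "dyck D \<Longrightarrow> D \<noteq> [] \<Longrightarrow> \<not> last D"
proof -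
  assume d: "dyck D" and ne: "D \<noteq> []"
  have "0 \<le> bal (butlast D)"
    using d by (simp add: dyck_def butlast_conv_take)
  moreover have "bal D = bal (butlast D) + bal [last D]"
    using append_butlast_last_id[OF ne] by (metis bal_append)
  ultimately show ?thesis
    using d by (auto simp: dyck_def)
qed

lemma dyck_append: "dyck A \<Longrightarrow> dyck B \<Longrightarrow> dyck (A @ B)"
  unfolding dyck_def by (auto simp: take_append)

lemma dyck_wrap: "dyck u \<Longrightarrow> dyck (True # u @ [False])"
  unfolding dyck_def
  by (auto simp: take_Cons' take_append)

lemma count_False_dyck: "dyck D \<Longrightarrow> count_list D False = ones D"
  using bal_eq_count[of D] by (simp add: dyck_def)

lemma dyck_take_drop:
  assumes "dyck D" and "bal (take j D) = 0"
  shows "dyck (take j D)" and "dyck (drop j D)"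
proof -
  have nonneg: "0 \<le> bal (take i D)" for i
    using assms(1) by (simp add: dyck_def)
  show "dyck (take j D)"
    using assms(2) nonneg by (simp add: dyck_def min_def)
  have "bal D = bal (take j D) + bal (drop j D)"
    by (metis append_take_drop_id bal_append)
  moreover have "take (j + i) D = take j D @ take i (drop j D)" for i
    by (simp add: take_add)
  ultimately show "dyck (drop j D)"
    using assms nonneg by (simp add: dyck_def) (metis bal_append add.left_neutral)
qed

lemma dyck_unwrap:
  assumes d: "dyck D" and ne: "D \<noteq> []"
    and prime: "\<And>i. 0 < i \<Longrightarrow> i < length D \<Longrightarrow> bal (take i D) \<noteq> 0"
  shows "\<exists>u. dyck u \<and> D = True # u @ [False]"
proof -
  obtain ys where D1: "D = True # ys"
    using dyck_hd[OF d ne] ne by (cases D) auto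
  have "ys \<noteq> []"
    using d D1 by (auto simp: dyck_def)
  moreover have "\<not> last ys"
    using dyck_last[OF d ne] D1 \<open>ys \<noteq> []\<close> by simp
  ultimately have "ys = butlast ys @ [False]"
    using append_butlast_last_id[of ys] by (metis (full_types))
  then obtain u where Du: "D = True # u @ [False]"
    using D1 by metis
  have "0 \<le> bal (take i u)" for i
  proof (cases "i < length u")
    case True
    have "take (Suc i) D = True # take i u"
      using Du True by simp
    moreover have "0 \<le> bal (take (Suc i) D)"
      using d by (simp add: dyck_def)
    moreover have "bal (take (Suc i) D) \<noteq> 0"
      using prime[of "Suc i"] True Du by simp
    ultimately show ?thesis
      by simp
  next
    case False
    then show ?thesis
      using d Du by (simp add: dyck_def)
  qed
  then have "dyck u"
    using d Du by (simp add: dyck_def)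
  then show ?thesis
    using Du by blast
qed

lemma dyck_decomp:
  assumes d: "dyck D" and ne: "D \<noteq> []"
  shows "(\<exists>u. dyck u \<and> D = True # u @ [False]) \<or>
         (\<exists>A B. dyck A \<and> dyck B \<and> A \<noteq> [] \<and> B \<noteq> [] \<and> D = A @ B)"
proof -
  define P where "P j \<longleftrightarrow> 0 < j \<and> bal (take j D) = 0" for j
  have PD: "P (length D)"
    using d ne by (simp add: P_def dyck_def)
  define j where "j = (LEAST j. P j)"
  have Pj: "P j"
    unfolding j_def using PD by (rule LeastI)
  have jle: "j \<le> length D"
    unfolding j_def using PD by (rule Least_le)
  show ?thesis
  proof (cases "j < length D")
    case True
    have "take j D \<noteq> []" "drop j D \<noteq> []"
      using True Pj by (auto simp: P_def)
    moreover have "dyck (take j D)" "dyck (drop j D)"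
      using dyck_take_drop[OF d] Pj unfolding P_def by blast+
    ultimately show ?thesis
      by (intro disjI2 exI[of _ "take j D"] exI[of _ "drop j D"]) simp
  next
    case False
    have "bal (take i D) \<noteq> 0" if "0 < i" "i < length D" for i
      using not_less_Least[of i P] that False jle unfolding j_def P_def by simp
    then show ?thesis
      using dyck_unwrap[OF d ne] by blast
  qed
qed

lemma dyck_induct [consumes 1, case_names Nil wrap append]:
  assumes "dyck D"
    and "P []"
    and "\<And>u. dyck u \<Longrightarrow> P u \<Longrightarrow> P (True # u @ [False])"
    and "\<And>A B. dyck A \<Longrightarrow> dyck B \<Longrightarrow> A \<noteq> [] \<Longrightarrow> B \<noteq> [] \<Longrightarrow> P A \<Longrightarrow> P B \<Longrightarrow> P (A @ B)"
  shows "P D"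
  using assms(1)
proof (induction "length D" arbitrary: D rule: less_induct)
  case less
  show ?case
  proof (cases "D = []")
    case False
    from dyck_decomp[OF less.prems False] show ?thesis
    proof (elim disjE exE conjE)
      fix u assume "dyck u" "D = True # u @ [False]"
      then show ?thesis
        using less assms(3) by simp
    next
      fix A B assume "dyck A" "dyck B" "A \<noteq> []" "B \<noteq> []" "D = A @ B"
      then show ?thesis
        using less assms(4) by simp
    qed
  qed (use assms(2) in simp)
qed

subsection \<open>The multiset \<open>W\<close> of a Dyck word\<close>

lemma first_return_wrap:
  assumes "dyck u"
  shows "first_return (True # u @ False # B) = length u + 2"
proof -
  let ?y = "True # u @ False # B"
  have ret: "bal (take (length u + 2) ?y) = 0"
    using assms by (simp add: dyck_def)
  have "(LEAST j. 0 < j \<and> bal (take j ?y) = 0) = length u + 2"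
  proof (rule Least_equality)
    fix j assume j: "0 < j \<and> bal (take j ?y) = 0"
    show "length u + 2 \<le> j"
    proof (rule ccontr)
      assume "\<not> ?thesis"
      then obtain i where "j = Suc i" "take j ?y = True # take i u"
        using j by (cases j) auto
      then show False
        using j assms by (simp add: dyck_def) (smt (verit))
    qed
  qed (use ret in simp)
  moreover have "\<exists>j. 0 < j \<and> j \<le> length ?y \<and> bal (take j ?y) = 0"
    using ret by (intro exI[of _ "length u + 2"]) simp
  ultimately show ?thesis
    unfolding first_return_def by simp
qed

lemma Wd_Nil [simp]: "Wd [] = {#}"
  by (subst Wd.simps) simp

lemma Wd_wrap: "dyck u \<Longrightarrow> Wd (True # u @ [False]) = (if u = [] then {#1#} else plus_one (Wd u))"
  using first_return_wrap[of u "[]"] by (subst Wd.simps) (simp add: Let_def)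

lemma Wd_wrap_Cons:
  "dyck u \<Longrightarrow> B \<noteq> [] \<Longrightarrow> Wd (True # u @ False # B) = Wd (True # u @ [False]) + Wd B"
  using first_return_wrap[of u B] by (subst Wd.simps) (simp add: Let_def)

lemma Wd_append: "dyck A \<Longrightarrow> dyck B \<Longrightarrow> Wd (A @ B) = Wd A + Wd B"
proof (induction A arbitrary: B rule: dyck_induct)
  case (wrap u)
  then show ?case
    by (cases "B = []") (auto simp: Wd_wrap_Cons)
next
  case (append A1 A2)
  then show ?case
    using dyck_append by (simp add: add.assoc)
qed simp

lemma Wd_nonempty: "dyck D \<Longrightarrow> D \<noteq> [] \<Longrightarrow> Wd D \<noteq> {#}"
proof (induction D rule: dyck_induct)
  case (wrap u)
  then show ?case
    by (auto simp: Wd_wrap plus_one_def)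
qed (simp_all add: Wd_append)

subsection \<open>Deleting peaks\<close>

fun del_peaks :: "bool list \<Rightarrow> bool list" where
  "del_peaks (True # False # xs) = del_peaks xs"
| "del_peaks (x # xs) = x # del_peaks xs"
| "del_peaks [] = []"

fun del_valleys :: "bool list \<Rightarrow> bool list" where
  "del_valleys (False # True # xs) = del_valleys xs"
| "del_valleys (x # xs) = x # del_valleys xs"
| "del_valleys [] = []"

lemma del_peaks_append:
  "xs = [] \<or> ys = [] \<or> \<not> last xs \<or> hd ys \<Longrightarrow> del_peaks (xs @ ys) = del_peaks xs @ del_peaks ys"
  by (induction xs rule: del_peaks.induct; cases ys) (auto split: if_splits)

lemma del_peaks_map_Not: "del_peaks (map Not xs) = map Not (del_valleys xs)"
  by (induction xs rule: del_valleys.induct) auto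

lemma del_peaks_True_Cons: "del_peaks (True # xs) = del_valleys (xs @ [True])"
proof (induction "length xs" arbitrary: xs rule: less_induct)
  case less
  show ?case
  proof (cases xs rule: remdups_adj.cases)
    case (2 x)
    then show ?thesis
      by (cases x) auto
  next
    case (3 x y ys)
    then show ?thesis
      using less[of "y # ys"] less[of ys] by (cases x; cases y) auto
  qed auto
qed

text \<open>Complementing exchanges peaks and valleys; moving the closing \<open>0\<close> to the front realigns
  the valleys of \<open>D\<close> with its peaks.\<close>

lemma del_peaks_compl_block:
  assumes "D = [] \<or> hd D"
  shows "del_peaks (map Not D @ [False]) = False # map Not (del_peaks D)"
proof (cases D)
  case (Cons a E)
  have "map Not D @ [False] = map Not (D @ [True])"
    by simp
  then have "del_peaks (map Not D @ [False]) = map Not (del_valleys (D @ [True]))"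
    by (simp only: del_peaks_map_Not)
  also have "del_valleys (D @ [True]) = True # del_valleys (E @ [True])"
    using Cons assms by simp
  also have "del_valleys (E @ [True]) = del_peaks D"
    using Cons assms by (simp add: del_peaks_True_Cons)
  finally show ?thesis
    by simp
qed simp

lemma del_peaks_wrap:
  assumes "dyck u"
  shows "del_peaks (True # u @ [False]) = (if u = [] then [] else True # del_peaks u @ [False])"
proof (cases u)
  case (Cons a v)
  then have "a"
    using dyck_hd[OF assms] by simp
  moreover have "del_peaks (u @ [False]) = del_peaks u @ [False]"
    using dyck_last[OF assms] Cons by (subst del_peaks_append) auto
  ultimately show ?thesis
    using Cons by simp
qed simp

lemma dyck_del_peaks: "dyck D \<Longrightarrow> dyck (del_peaks D)"
proof (induction D rule: dyck_induct)
  case (wrap u)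
  then show ?case
    by (simp add: del_peaks_wrap dyck_wrap)
next
  case (append A B)
  then show ?case
    using dyck_last[of A] by (simp add: del_peaks_append dyck_append)
qed simp

definition lift_mset :: "nat multiset \<Rightarrow> nat \<Rightarrow> nat multiset" where
  "lift_mset X c = image_mset Suc X + replicate_mset c 1"

lemma lift_mset_add: "lift_mset X a + lift_mset Y b = lift_mset (X + Y) (a + b)"
proof -
  have "replicate_mset (a + b) x = replicate_mset a x + replicate_mset b x" for x :: nat
    by (induction a) auto
  then show ?thesis
    unfolding lift_mset_def by (simp add: ac_simps)
qed

lemma plus_one_lift_mset:
  assumes "X \<noteq> {#}"
  shows "plus_one (lift_mset X c) = lift_mset (plus_one X) c"
proof -
  let ?M = "Max (set_mset X)"
  have MX: "?M \<in># X"
    using assms by auto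
  have "Max (set_mset (lift_mset X c)) = Suc ?M"
    using MX by (intro Max_eqI) (auto simp: lift_mset_def split: if_splits)
  then show ?thesis
    using MX unfolding plus_one_def lift_mset_def by (simp add: image_mset_Diff)
qed

lemma size_plus_one: "X \<noteq> {#} \<Longrightarrow> size (plus_one X) = size X"
  by (simp add: plus_one_def size_Diff_submset nonempty_has_size)

lemma plus_one_lift_mset_empty:
  assumes "0 < c"
  shows "plus_one (lift_mset {#} c) = lift_mset {#1#} (c - 1)"
proof -
  have "set_mset (replicate_mset c (1::nat)) = {1}"
    using assms by simp
  then show ?thesis
    using assms unfolding plus_one_def lift_mset_def by (cases c) simp_all
qed

lemma size_Wd: "dyck D \<Longrightarrow> ones D = ones (del_peaks D) + size (Wd D)"
proof (induction D rule: dyck_induct)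
  case (wrap u)
  then show ?case
    using Wd_nonempty[of u] by (auto simp: Wd_wrap del_peaks_wrap size_plus_one)
next
  case (append A B)
  then show ?case
    using dyck_last[of A] by (simp add: Wd_append del_peaks_append)
qed simp

lemma size_Wd_del_peaks_le: "dyck D \<Longrightarrow> size (Wd (del_peaks D)) \<le> size (Wd D)"
proof (induction D rule: dyck_induct)
  case (wrap u)
  have "0 < size (Wd u)" if "u \<noteq> []"
    using Wd_nonempty[OF wrap(1) that] by (simp add: nonempty_has_size)
  then show ?case
    using wrap Wd_nonempty dyck_del_peaks
    by (auto simp: Wd_wrap del_peaks_wrap size_plus_one)
next
  case (append A B)
  then show ?case
    using dyck_last[of A] dyck_del_peaks
    by (simp add: Wd_append del_peaks_append add_mono)
qed simp

lemma Wd_del_peaks_wrap: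
  assumes u: "dyck u" "u \<noteq> []"
    and IH: "Wd u = lift_mset (Wd (del_peaks u)) (size (Wd u) - size (Wd (del_peaks u)))"
  defines "y \<equiv> True # u @ [False]"
  shows "Wd y = lift_mset (Wd (del_peaks y)) (size (Wd y) - size (Wd (del_peaks y)))"
proof -
  let ?X = "Wd (del_peaks u)" and ?c = "size (Wd u) - size (Wd (del_peaks u))"
  have "Wd u \<noteq> {#}"
    using Wd_nonempty[OF u] .
  then have size_y: "size (Wd y) = size (Wd u)"
    using u by (simp add: y_def Wd_wrap size_plus_one)
  have "Wd y = plus_one (lift_mset ?X ?c)"
    using u IH by (simp add: y_def Wd_wrap)
  show ?thesis
  proof (cases "del_peaks u = []")
    case True
    then have "0 < ?c"
      using \<open>Wd u \<noteq> {#}\<close> by (simp add: nonempty_has_size)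
    then have "Wd y = lift_mset {#1#} (?c - 1)"
      using \<open>Wd y = _\<close> True plus_one_lift_mset_empty by simp
    moreover have "Wd (del_peaks y) = {#1#}"
      using u True Wd_wrap[of "[]"] by (simp add: y_def del_peaks_wrap)
    ultimately show ?thesis
      using True size_y by simp
  next
    case False
    then have "?X \<noteq> {#}"
      using u dyck_del_peaks Wd_nonempty by blast
    then have "Wd y = lift_mset (plus_one ?X) ?c"
      using \<open>Wd y = _\<close> plus_one_lift_mset by simp
    moreover have "Wd (del_peaks y) = plus_one ?X"
      using u False dyck_del_peaks[of u] by (simp add: y_def del_peaks_wrap Wd_wrap)
    ultimately show ?thesis
      unfolding size_y using size_plus_one[OF \<open>?X \<noteq> {#}\<close>] by simp
  qed
qed

lemma Wd_del_peaks:
  "dyck D \<Longrightarrow> Wd D = lift_mset (Wd (del_peaks D)) (size (Wd D) - size (Wd (del_peaks D)))"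
proof (induction D rule: dyck_induct)
  case (wrap u)
  then show ?case
    using Wd_del_peaks_wrap Wd_wrap[of "[]"] by (cases "u = []") (simp_all add: lift_mset_def)
next
  case (append A B)
  let ?A' = "del_peaks A" and ?B' = "del_peaks B"
  have peaks: "del_peaks (A @ B) = ?A' @ ?B'"
    using dyck_last[OF append(1,3)] by (simp add: del_peaks_append)
  have "Wd A + Wd B = lift_mset (Wd ?A') (size (Wd A) - size (Wd ?A'))
                   + lift_mset (Wd ?B') (size (Wd B) - size (Wd ?B'))"
    by (rule arg_cong2[OF append(5,6)])
  also have "\<dots> = lift_mset (Wd ?A' + Wd ?B') (size (Wd A) + size (Wd B) - size (Wd ?A' + Wd ?B'))"
    using size_Wd_del_peaks_le[OF append(1)] size_Wd_del_peaks_le[OF append(2)]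
    by (simp add: lift_mset_add)
  finally show ?case
    unfolding peaks Wd_append[OF append(1,2)] size_union[symmetric]
      Wd_append[OF dyck_del_peaks[OF append(1)] dyck_del_peaks[OF append(2)]] .
qed (simp add: lift_mset_def)

definition join_blocks :: "bool list list \<Rightarrow> bool list" where
  "join_blocks Ds = concat (map (\<lambda>D. D @ [False]) Ds)"

lemma join_blocks_Nil [simp]: "join_blocks [] = []"
  and join_blocks_Cons [simp]: "join_blocks (D # Ds) = D @ False # join_blocks Ds"
  by (simp_all add: join_blocks_def)

abbreviation Wds :: "bool list list \<Rightarrow> nat multiset" where
  "Wds Ds \<equiv> sum_list (map Wd Ds)"

lemma last_join_blocks: "Ds \<noteq> [] \<Longrightarrow> \<not> last (join_blocks Ds)"
proof (induction Ds)
  case (Cons D Ds)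
  then show ?case
    by (cases Ds) auto
qed simp

lemma ones_join_blocks_compl:
  "\<forall>D\<in>set Ds. dyck D \<Longrightarrow> ones (join_blocks (map (map Not) Ds)) = ones (join_blocks Ds)"
  by (induction Ds) (auto simp: count_map_Not count_False_dyck)

lemma ones_join_blocks_del_peaks:
  "\<forall>D\<in>set Ds. dyck D \<Longrightarrow> ones (join_blocks Ds) = ones (join_blocks (map del_peaks Ds)) + size (Wds Ds)"
  by (induction Ds) (auto simp: size_Wd)

lemma size_Wds_del_peaks_le:
  "\<forall>D\<in>set Ds. dyck D \<Longrightarrow> size (Wds (map del_peaks Ds)) \<le> size (Wds Ds)"
  by (induction Ds) (auto simp: add_mono size_Wd_del_peaks_le)

lemma Wds_del_peaks:
  assumes "\<forall>D\<in>set Ds. dyck D"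
  shows "Wds Ds = lift_mset (Wds (map del_peaks Ds)) (size (Wds Ds) - size (Wds (map del_peaks Ds)))"
  using assms
proof (induction Ds)
  case Nil
  then show ?case
    by (simp add: lift_mset_def)
next
  case (Cons D Ds)
  have "dyck D"
    using Cons.prems by simp
  have "Wds (D # Ds) = lift_mset (Wd (del_peaks D)) (size (Wd D) - size (Wd (del_peaks D)))
      + lift_mset (Wds (map del_peaks Ds)) (size (Wds Ds) - size (Wds (map del_peaks Ds)))"
    using Wd_del_peaks[OF \<open>dyck D\<close>] Cons by simp
  also have "\<dots> = lift_mset (Wds (map del_peaks (D # Ds))) (size (Wds (D # Ds)) - size (Wds (map del_peaks (D # Ds))))"
    using size_Wd_del_peaks_le[OF \<open>dyck D\<close>] size_Wd[OF \<open>dyck D\<close>]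
      size_Wds_del_peaks_le[of Ds] Cons.prems
    by (simp add: lift_mset_add)
  finally show ?case .
qed

lemma del_peaks_join_blocks:
  "\<forall>D\<in>set Ds. dyck D \<Longrightarrow> del_peaks (join_blocks Ds) = join_blocks (map del_peaks Ds)"
proof (induction Ds)
  case (Cons D Ds)
  then have "del_peaks (D @ False # join_blocks Ds) = del_peaks D @ del_peaks (False # join_blocks Ds)"
    using dyck_last[of D] by (intro del_peaks_append) auto
  then show ?case
    using Cons by simp
qed simp

lemma rotate1_concat_map_Cons:
  "Xs \<noteq> [] \<Longrightarrow> rotate1 (concat (map ((#) a) Xs)) = concat (map (\<lambda>X. X @ [a]) Xs)"
proof (induction Xs)
  case (Cons X Xs)
  then show ?case
    by (cases Xs) auto
qed simp

lemma del_peaks_join_blocks_compl: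
  assumes "\<forall>D\<in>set Ds. dyck D" and "Ds \<noteq> []"
  shows "join_blocks (map (map Not) (map del_peaks Ds)) = rotate1 (del_peaks (join_blocks (map (map Not) Ds)))"
proof -
  have "del_peaks (join_blocks (map (map Not) Ds)) = concat (map (\<lambda>D. False # map Not (del_peaks D)) Ds)"
    using assms(1)
  proof (induction Ds)
    case (Cons D Ds)
    have "del_peaks ((map Not D @ [False]) @ join_blocks (map (map Not) Ds))
        = del_peaks (map Not D @ [False]) @ del_peaks (join_blocks (map (map Not) Ds))"
      by (intro del_peaks_append) simp
    moreover have "del_peaks (map Not D @ [False]) = False # map Not (del_peaks D)"
      using Cons.prems dyck_hd[of D] by (intro del_peaks_compl_block) auto
    ultimately show ?case
      using Cons by simp
  qed simp
  then show ?thesis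
    using rotate1_concat_map_Cons[of "map (\<lambda>D. map Not (del_peaks D)) Ds" False] assms(2)
    by (simp add: join_blocks_def o_def)
qed

lemma del_peaks_rotate:
  assumes "\<not> last v" and "\<not> last (rotate s v)"
  shows "\<exists>t. del_peaks (rotate s v) = rotate t (del_peaks v)"
proof (cases "v = [] \<or> s mod length v = 0")
  case False
  let ?a = "take (s mod length v) v" and ?b = "drop (s mod length v) v"
  have "?a \<noteq> []" "?b \<noteq> []"
    using False by (simp_all add: not_le)
  have rot: "rotate s v = ?b @ ?a"
    by (simp add: rotate_drop_take)
  have "\<not> last ?a"
    using assms(2) \<open>?a \<noteq> []\<close> by (simp add: rot)
  moreover have "\<not> last ?b"
    using assms(1) \<open>?b \<noteq> []\<close> by (metis append_take_drop_id last_appendR)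
  ultimately have "del_peaks v = del_peaks ?a @ del_peaks ?b"
    and "del_peaks (rotate s v) = del_peaks ?b @ del_peaks ?a"
    using del_peaks_append[of ?a ?b] del_peaks_append[of ?b ?a] by (simp_all add: rot)
  then show ?thesis
    using rotate_append[of "del_peaks ?a" "del_peaks ?b"]
    by (intro exI[of _ "length (del_peaks ?a)"]) (simp only:)
qed (use rotate_conv_mod[of s v] in \<open>auto intro: exI[of _ 0]\<close>)

lemma join_blocks_del_peaks_rotation:
  assumes "\<forall>D\<in>set Ds. dyck D" "\<forall>E\<in>set Es. dyck E" "Ds \<noteq> []" "Es \<noteq> []"
    and "join_blocks Es = rotate s (join_blocks (map (map Not) Ds))"
  shows "\<exists>t. join_blocks (map del_peaks Es) = rotate t (join_blocks (map (map Not) (map del_peaks Ds)))"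
proof -
  let ?v = "join_blocks (map (map Not) Ds)"
  obtain t where t: "del_peaks (rotate s ?v) = rotate t (del_peaks ?v)"
    using del_peaks_rotate[of ?v s] last_join_blocks assms(3,4,5) by fastforce
  obtain q where q: "del_peaks ?v = rotate q (join_blocks (map (map Not) (map del_peaks Ds)))"
    using rotate_inverse[of "del_peaks ?v" 1] del_peaks_join_blocks_compl[OF assms(1,3)] by auto
  have "join_blocks (map del_peaks Es) = del_peaks (join_blocks Es)"
    using del_peaks_join_blocks[OF assms(2)] by simp
  also have "\<dots> = rotate (t + q) (join_blocks (map (map Not) (map del_peaks Ds)))"
    using assms(5) t q by (simp add: rotate_rotate)
  finally show ?thesis ..
qed

lemma Wds_eq_empty:
  assumes "\<forall>D\<in>set Ds. dyck D" and "ones (join_blocks Ds) = 0"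
  shows "Wds Ds = {#}"
  using ones_join_blocks_del_peaks[OF assms(1)] assms(2) by simp

lemma Wds_nonempty:
  "\<forall>D\<in>set Ds. dyck D \<Longrightarrow> ones (join_blocks Ds) \<noteq> 0 \<Longrightarrow> Wds Ds \<noteq> {#}"
proof (induction Ds)
  case (Cons D Ds)
  then show ?case
    using Wd_nonempty[of D] by (cases "D = []") auto
qed simp

lemma Wds_compl_rotation:
  assumes "\<forall>D\<in>set Ds. dyck D" "\<forall>E\<in>set Es. dyck E" "Ds \<noteq> []" "Es \<noteq> []"
    and "join_blocks Es = rotate s (join_blocks (map (map Not) Ds))"
  shows "Wds Es = Wds Ds"
  using assms
proof (induction "ones (join_blocks Ds)" arbitrary: Ds Es s rule: less_induct)
  case less
  let ?Ds' = "map del_peaks Ds" and ?Es' = "map del_peaks Es"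
  have dyck': "\<forall>D\<in>set ?Ds'. dyck D" "\<forall>E\<in>set ?Es'. dyck E"
    using less.prems(1,2) dyck_del_peaks by auto
  have ones_eq: "ones (join_blocks Es) = ones (join_blocks Ds)"
    using less.prems(5) count_list_rotate ones_join_blocks_compl[OF less.prems(1)] by metis
  show ?case
  proof (cases "ones (join_blocks Ds) = 0")
    case True
    then show ?thesis
      using Wds_eq_empty less.prems(1,2) ones_eq by metis
  next
    case False
    obtain t where t: "join_blocks ?Es' = rotate t (join_blocks (map (map Not) ?Ds'))"
      using join_blocks_del_peaks_rotation[OF less.prems] by blast
    have "Wds Ds \<noteq> {#}"
      using Wds_nonempty[OF less.prems(1) False] .
    then have "ones (join_blocks ?Ds') < ones (join_blocks Ds)"
      using ones_join_blocks_del_peaks[OF less.prems(1)] by (simp add: nonempty_has_size)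
    moreover have "?Ds' \<noteq> []" "?Es' \<noteq> []"
      using less.prems(3,4) by simp_all
    ultimately have IH: "Wds ?Es' = Wds ?Ds'"
      using less.hyps dyck' t by blast
    have "ones (join_blocks ?Es') = ones (join_blocks ?Ds')"
      using t count_list_rotate ones_join_blocks_compl[OF dyck'(1)] by metis
    then have "size (Wds Es) = size (Wds Ds)"
      using ones_join_blocks_del_peaks[OF less.prems(1)] ones_join_blocks_del_peaks[OF less.prems(2)]
        ones_eq by simp
    then show ?thesis
      using Wds_del_peaks[OF less.prems(1)] Wds_del_peaks[OF less.prems(2)] IH by metis
  qed
qed

subsection \<open>Heights and matching\<close>

definition height :: "bool list \<Rightarrow> nat \<Rightarrow> int" where
  "height z j = bal (take j z)"

lemma height_0 [simp]: "height z 0 = 0"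
  by (simp add: height_def)

lemma height_Suc: "j < length z \<Longrightarrow> height z (Suc j) = height z j + (if z ! j then 1 else -1)"
  by (simp add: height_def take_Suc_conv_app_nth)

lemma height_ge_length: "length z \<le> j \<Longrightarrow> height z j = bal z"
  by (simp add: height_def)

lemma height_step: "height z (Suc t) \<le> height z t + 1 \<and> height z t \<le> height z (Suc t) + 1"
  by (cases "t < length z") (auto simp: height_Suc height_ge_length)

lemma height_append:
  "height (xs @ ys) t = (if t \<le> length xs then height xs t else bal xs + height ys (t - length xs))"
  by (simp add: height_def take_append)

lemma height_drop: "height (drop s u) t = height u (s + t) - height u s"
  by (cases "s \<le> length u") (simp_all add: height_def take_add)

lemma height_take: "t \<le> s \<Longrightarrow> height (take s u) t = height u t"
  by (simp add: height_def min_def)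

lemma height_dyck_nonneg: "dyck D \<Longrightarrow> 0 \<le> height D t"
  by (simp add: dyck_def height_def)

lemma height_block_Cons:
  assumes "dyck D"
  shows "height (D @ False # z) t =
    (if t \<le> length D then height D t else height z (t - Suc (length D)) - 1)"
proof (cases "t \<le> length D")
  case False
  then have "t - length D = Suc (t - Suc (length D))"
    by simp
  then show ?thesis
    using assms False by (simp add: height_append dyck_def height_ge_length height_def)
qed (simp add: height_append)

lemma discrete_ivt_down:
  fixes g :: "nat \<Rightarrow> int"
  assumes step: "\<And>t. g (Suc t) \<le> g t + 1 \<and> g t \<le> g (Suc t) + 1"
  shows "a \<le> b \<Longrightarrow> c \<le> g a \<Longrightarrow> g b \<le> c \<Longrightarrow> \<exists>t. a \<le> t \<and> t \<le> b \<and> g t = c"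
proof (induction b)
  case (Suc b)
  show ?case
  proof (cases "a = Suc b")
    case True
    then show ?thesis
      using Suc by auto
  next
    case False
    then have "a \<le> b"
      using Suc by simp
    show ?thesis
    proof (cases "g b \<le> c")
      case True
      then show ?thesis
        using Suc \<open>a \<le> b\<close> le_SucI by blast
    next
      case False
      then have "g (Suc b) = c"
        using step[of b] Suc.prems by simp
      then show ?thesis
        using Suc.prems by auto
    qed
  qed
qed auto

lemma discrete_ivt_up:
  fixes g :: "nat \<Rightarrow> int"
  assumes step: "\<And>t. g (Suc t) \<le> g t + 1 \<and> g t \<le> g (Suc t) + 1"
  shows "a \<le> b \<Longrightarrow> g a \<le> c \<Longrightarrow> c \<le> g b \<Longrightarrow> \<exists>t. a \<le> t \<and> t \<le> b \<and> g t = c"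
proof -
  assume "a \<le> b" "g a \<le> c" "c \<le> g b"
  then have "\<exists>t. a \<le> t \<and> t \<le> b \<and> - g t = - c"
    using step by (intro discrete_ivt_down[where g = "\<lambda>t. - g t"]) (auto simp: algebra_simps)
  then show ?thesis
    by simp
qed

text \<open>In this cycle-lemma normal form each \<open>1\<close> at position \<open>i\<close> is matched to the first
  \<open>q \<ge> i\<close> after which the height is back to its level before \<open>i\<close>, without wrapping around.\<close>

definition ends_at_strict_min :: "bool list \<Rightarrow> bool" where
  "ends_at_strict_min z \<longleftrightarrow> (\<forall>t < length z. height z (length z) < height z t)"

lemma cyc_eq_take_drop: "i + j \<le> length z \<Longrightarrow> cyc z i j = take j (drop i z)"
  unfolding cyc_def by (rule nth_equalityI) auto

lemma bal_cyc: "i + j \<le> length z \<Longrightarrow> bal (cyc z i j) = height z (i + j) - height z i"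
  using cyc_eq_take_drop height_drop[of i z j] by (simp add: height_def)

lemma match_len_eq:
  assumes "i \<le> q" "q < length z" and "height z (Suc q) = height z i"
    and "\<And>t. i < t \<Longrightarrow> t \<le> q \<Longrightarrow> height z t \<noteq> height z i"
  shows "match_len z i = Suc q - i"
  unfolding match_len_def
proof (rule Least_equality)
  show "0 < Suc q - i \<and> bal (cyc z i (Suc q - i)) = 0"
    using assms(1-3) by (simp add: bal_cyc)
next
  fix y assume y: "0 < y \<and> bal (cyc z i y) = 0"
  show "Suc q - i \<le> y"
  proof (rule ccontr)
    assume "\<not> ?thesis"
    then have "i + y \<le> q"
      by linarith
    then show False
      using y assms(2) assms(4)[of "i + y"] by (simp add: bal_cyc)
  qed
qed

lemma match_strict_min:
  assumes "ends_at_strict_min z" "i < length z" "z ! i"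
  shows "0 < match_len z i" "i \<le> match_pos z i" "match_pos z i < length z"
    and "height z (Suc (match_pos z i)) = height z i"
proof -
  let ?n = "length z"
  have "height z (Suc i) = height z i + 1"
    using assms(2,3) by (simp add: height_Suc)
  moreover have "height z ?n < height z i"
    using assms(1,2) by (simp add: ends_at_strict_min_def)
  ultimately obtain t where t: "Suc i \<le> t" "t \<le> ?n" "height z t = height z i"
    using discrete_ivt_down[where g = "height z", OF height_step, of "Suc i" ?n "height z i"] assms(2) by force
  define T where "T = (LEAST t. i < t \<and> height z t = height z i)"
  have PT: "i < T \<and> height z T = height z i"
    unfolding T_def by (rule LeastI[of _ t]) (use t in auto)
  have "T \<le> t"
    unfolding T_def by (rule Least_le) (use t in auto)
  obtain q where q: "T = Suc q"
    using PT by (cases T) auto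
  have "match_len z i = Suc q - i"
    using PT q \<open>T \<le> t\<close> t not_less_Least[of _ "\<lambda>t. i < t \<and> height z t = height z i"]
    by (intro match_len_eq) (auto simp: T_def)
  then show "0 < match_len z i" "i \<le> match_pos z i" "match_pos z i < ?n"
    "height z (Suc (match_pos z i)) = height z i"
    using PT q \<open>T \<le> t\<close> t by (auto simp: match_pos_def)
qed

lemma closing_bracket_matched:
  assumes q: "q < length z" "\<not> z ! q" and low: "\<exists>t\<le>q. height z t \<le> height z (Suc q)"
  shows "q \<in> matched z"
proof -
  let ?c = "height z (Suc q)"
  have Hq: "height z q = ?c + 1"
    using q by (simp add: height_Suc)
  define i where "i = (GREATEST t. t \<le> q \<and> height z t \<le> ?c)"
  have Pi: "i \<le> q \<and> height z i \<le> ?c"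
    unfolding i_def using low by (rule GreatestI_ex_nat[where b = q]) blast
  have greatest: "t \<le> i" if "t \<le> q" "height z t \<le> ?c" for t
    unfolding i_def using that by (intro Greatest_le_nat[where b = q]) blast+
  have Hi: "height z i = ?c"
  proof (rule ccontr)
    assume "height z i \<noteq> ?c"
    then obtain t where "i \<le> t" "t \<le> q" "height z t = ?c"
      using discrete_ivt_up[where g = "height z", OF height_step, of i q ?c] Pi Hq by force
    then show False
      using greatest[of t] \<open>height z i \<noteq> ?c\<close> by (simp add: le_antisym)
  qed
  have "i < q"
    using Pi Hi Hq by (cases "i = q") auto
  have "z ! i"
  proof (rule ccontr)
    assume "\<not> z ! i"
    then have "height z (Suc i) = height z i - 1"
      using \<open>i < q\<close> q by (simp add: height_Suc)
    then show False
      using greatest[of "Suc i"] \<open>i < q\<close> Hi by simp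
  qed
  have "match_len z i = Suc q - i"
    using \<open>i < q\<close> q Hi greatest by (intro match_len_eq) (auto simp: not_le[symmetric])
  then have "match_pos z i = q"
    using \<open>i < q\<close> q by (simp add: match_pos_def)
  then show ?thesis
    using \<open>z ! i\<close> \<open>i < q\<close> q unfolding matched_def by auto
qed

lemma matched_strict_min:
  assumes "ends_at_strict_min z"
  shows "matched z = {q. q < length z \<and> (\<exists>t\<le>q. height z t \<le> height z (Suc q))}"
proof (intro set_eqI iffI)
  fix q assume "q \<in> matched z"
  then consider "q < length z" "z ! q" | i where "i < length z" "z ! i" "q = match_pos z i"
    unfolding matched_def by blast
  then show "q \<in> {q. q < length z \<and> (\<exists>t\<le>q. height z t \<le> height z (Suc q))}"
  proof cases
    case 1
    then show ?thesis
      by (auto simp: height_Suc intro!: exI[of _ q])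
  next
    case 2
    then show ?thesis
      using match_strict_min[OF assms] by (auto intro!: exI[of _ i])
  qed
next
  fix q assume "q \<in> {q. q < length z \<and> (\<exists>t\<le>q. height z t \<le> height z (Suc q))}"
  then show "q \<in> matched z"
    using closing_bracket_matched[of q z] by (cases "z ! q") (auto simp: matched_def)
qed

definition block_marks :: "bool list list \<Rightarrow> bool list" where
  "block_marks Ds = concat (map (\<lambda>D. replicate (length D) True @ [False]) Ds)"

definition marked_blocks :: "bool list list \<Rightarrow> (bool \<times> bool) list" where
  "marked_blocks Ds = concat (map (\<lambda>D. map (\<lambda>b. (b, True)) D @ [(False, False)]) Ds)"

lemma block_marks_Nil [simp]: "block_marks [] = []"
  and block_marks_Cons [simp]:
    "block_marks (D # Ds) = replicate (length D) True @ False # block_marks Ds"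
  by (simp_all add: block_marks_def)

lemma marked_blocks_Nil [simp]: "marked_blocks [] = []"
  and marked_blocks_Cons [simp]:
    "marked_blocks (D # Ds) = map (\<lambda>b. (b, True)) D @ (False, False) # marked_blocks Ds"
  by (simp_all add: marked_blocks_def)

lemma last_marked_blocks: "Ds \<noteq> [] \<Longrightarrow> last (marked_blocks Ds) = (False, False)"
proof (induction Ds)
  case (Cons D Ds)
  then show ?case
    by (cases Ds) auto
qed simp

lemma length_block_marks: "length (block_marks Ds) = length (join_blocks Ds)"
  by (induction Ds) auto

lemma zip_join_blocks_block_marks: "zip (join_blocks Ds) (block_marks Ds) = marked_blocks Ds"
proof -
  have "zip D (replicate (length D) True) = map (\<lambda>b. (b, True)) D" for D :: "bool list"
    by (induction D) auto
  then show ?thesis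
    by (induction Ds) (auto simp: zip_append)
qed

lemma bal_join_blocks: "\<forall>D\<in>set Ds. dyck D \<Longrightarrow> bal (join_blocks Ds) = - int (length Ds)"
  by (induction Ds) (auto simp: dyck_def)

lemma strict_min_join_blocks: "\<forall>D\<in>set Ds. dyck D \<Longrightarrow> ends_at_strict_min (join_blocks Ds)"
proof (induction Ds)
  case (Cons D Ds)
  let ?z = "join_blocks Ds"
  have d: "dyck D"
    using Cons.prems by simp
  have bottom: "height (D @ False # ?z) (length (D @ False # ?z)) = bal ?z - 1"
    using d by (simp add: height_block_Cons height_ge_length dyck_def)
  show ?case
    unfolding ends_at_strict_min_def join_blocks_Cons
  proof (intro allI impI)
    fix t assume t: "t < length (D @ False # ?z)"
    show "height (D @ False # ?z) (length (D @ False # ?z)) < height (D @ False # ?z) t"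
    proof (cases "t \<le> length D")
      case True
      then show ?thesis
        using bottom bal_join_blocks[of Ds] Cons.prems height_dyck_nonneg[OF d, of t]
        by (simp add: height_block_Cons[OF d])
    next
      case False
      then have "height ?z (length ?z) < height ?z (t - Suc (length D))"
        using Cons t by (simp add: ends_at_strict_min_def)
      then show ?thesis
        using bottom False d by (simp add: height_block_Cons height_ge_length)
    qed
  qed
qed (simp add: ends_at_strict_min_def)

lemma low_point_block_Cons:
  fixes D z :: "bool list"
  assumes d: "dyck D"
  defines "Z \<equiv> D @ False # z"
  shows "(\<exists>t \<le> Suc (length D) + q. height Z t \<le> height Z (Suc (Suc (length D) + q)))
    \<longleftrightarrow> (\<exists>t\<le>q. height z t \<le> height z (Suc q))"
proof
  have high: "height Z (Suc (Suc (length D) + q)) = height z (Suc q) - 1"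
    unfolding Z_def using d by (simp add: height_block_Cons)
  assume "\<exists>t \<le> Suc (length D) + q. height Z t \<le> height Z (Suc (Suc (length D) + q))"
  then obtain t where t: "t \<le> Suc (length D) + q" "height Z t \<le> height z (Suc q) - 1"
    using high by auto
  show "\<exists>t\<le>q. height z t \<le> height z (Suc q)"
  proof (cases "t \<le> length D")
    case True
    then have "0 \<le> height Z t"
      unfolding Z_def using height_dyck_nonneg[OF d, of t] by (simp add: height_block_Cons[OF d])
    then show ?thesis
      using t by (intro exI[of _ 0]) auto
  next
    case False
    then show ?thesis
      using t d unfolding Z_def by (intro exI[of _ "t - Suc (length D)"]) (auto simp: height_block_Cons)
  qed
next
  assume "\<exists>t\<le>q. height z t \<le> height z (Suc q)"
  then obtain t where "t \<le> q" "height z t \<le> height z (Suc q)"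
    by blast
  then show "\<exists>t \<le> Suc (length D) + q. height Z t \<le> height Z (Suc (Suc (length D) + q))"
    unfolding Z_def using d by (intro exI[of _ "Suc (length D) + t"]) (auto simp: height_block_Cons)
qed

lemma low_point_join_blocks:
  "\<forall>D\<in>set Ds. dyck D \<Longrightarrow> q < length (join_blocks Ds) \<Longrightarrow>
    (\<exists>t\<le>q. height (join_blocks Ds) t \<le> height (join_blocks Ds) (Suc q)) \<longleftrightarrow> block_marks Ds ! q"
proof (induction Ds arbitrary: q)
  case (Cons D Ds)
  have d: "dyck D"
    using Cons.prems by simp
  let ?Z = "D @ False # join_blocks Ds"
  consider "q < length D" | "q = length D" | q' where "q = Suc (length D) + q'"
    using less_imp_Suc_add[of "length D" q] by (cases rule: linorder_cases[of q "length D"]) auto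
  then show ?case
  proof cases
    case 1
    have "height ?Z 0 \<le> height ?Z (Suc q)"
      using 1 height_dyck_nonneg[OF d] by (simp add: height_block_Cons[OF d])
    moreover have "block_marks (D # Ds) ! q"
      using 1 by (simp add: nth_append)
    ultimately show ?thesis
      by auto
  next
    case 2
    have "\<not> height ?Z t \<le> height ?Z (Suc q)" if "t \<le> q" for t
      using 2 that height_dyck_nonneg[OF d, of t] d
      by (simp add: height_block_Cons[OF d] dyck_def height_ge_length)
    moreover have "\<not> block_marks (D # Ds) ! q"
      using 2 by (simp add: nth_append)
    ultimately show ?thesis
      by auto
  next
    case 3
    then show ?thesis
      using Cons low_point_block_Cons[OF d, where z = "join_blocks Ds" and q = q'] by (simp add: nth_append)
  qed
qed simp

lemma matched_join_blocks:
  "\<forall>D\<in>set Ds. dyck D \<Longrightarrow> matched (join_blocks Ds) = {q. q < length (join_blocks Ds) \<and> block_marks Ds ! q}"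
  using matched_strict_min[OF strict_min_join_blocks] low_point_join_blocks by blast

lemma match_len_join_blocks:
  "\<forall>D\<in>set Ds. dyck D \<Longrightarrow> i < length (join_blocks Ds) \<Longrightarrow> join_blocks Ds ! i \<Longrightarrow> 0 < match_len (join_blocks Ds) i"
  using match_strict_min(1)[OF strict_min_join_blocks] by blast

lemma f_join_blocks:
  assumes "\<forall>D\<in>set Ds. dyck D"
  shows "f (join_blocks Ds) = join_blocks (map (map Not) Ds)"
proof -
  have "f (join_blocks Ds) = map (\<lambda>(b, m). if m then \<not> b else b) (zip (join_blocks Ds) (block_marks Ds))"
    unfolding f_def by (rule nth_equalityI) (auto simp: matched_join_blocks[OF assms] length_block_marks)
  also have "\<dots> = join_blocks (map (map Not) Ds)"
    unfolding zip_join_blocks_block_marks by (induction Ds) auto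
  finally show ?thesis .
qed

abbreviation marks :: "bool list \<Rightarrow> (bool \<times> bool) list" where
  "marks x \<equiv> zip x (map (\<lambda>i. i \<in> matched x) [0..<length x])"

lemma marks_join_blocks: "\<forall>D\<in>set Ds. dyck D \<Longrightarrow> marks (join_blocks Ds) = marked_blocks Ds"
proof -
  assume "\<forall>D\<in>set Ds. dyck D"
  then have "map (\<lambda>i. i \<in> matched (join_blocks Ds)) [0..<length (join_blocks Ds)] = block_marks Ds"
    by (intro nth_equalityI) (auto simp: matched_join_blocks length_block_marks)
  then show ?thesis
    by (simp add: zip_join_blocks_block_marks)
qed

lemma mod_add_complement:
  fixes a r n :: nat
  assumes "0 < n"
  shows "(n - r mod n + (r + a)) mod n = a mod n"
proof -
  have "(n - r mod n + (r + a)) mod n = (a + r div n * n + n) mod n"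
    using div_mult_mod_eq[of r n] mod_less_divisor[OF assms, of r] by (intro arg_cong[where f = "\<lambda>m. m mod n"]) linarith
  also have "(a + r div n * n + n) mod n = a mod n"
    by simp
  finally show ?thesis .
qed

lemma mod_add_left_inj:
  fixes a b r n :: nat
  assumes "a < n" "b < n" "(r + a) mod n = (r + b) mod n"
  shows "a = b"
proof -
  have "(n - r mod n + (r + a)) mod n = (n - r mod n + (r + b)) mod n"
    using assms(3) by (metis mod_add_right_eq)
  then show ?thesis
    using assms(1,2) mod_add_complement[of n r] by simp
qed

lemma mod_add_left_surj:
  fixes i r n :: nat
  assumes "i < n"
  shows "\<exists>j<n. (r + j) mod n = i"
proof (intro exI conjI)
  show "(r + (n - r mod n + i) mod n) mod n = i"
    using assms mod_add_complement[of n r i] by (simp add: mod_add_right_eq add.left_commute)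
qed (use assms in simp)

lemma mod_length_less: "i < length w \<Longrightarrow> r mod length w < length w"
  by (intro mod_less_divisor) linarith

lemma cyc_rotate:
  assumes "i < length w"
  shows "cyc (rotate r w) i j = cyc w ((r + i) mod length w) j"
  unfolding cyc_def
proof (rule nth_equalityI)
  fix t assume "t < length (map (\<lambda>t. rotate r w ! ((i + t) mod length (rotate r w))) [0..<j])"
  have "(r + (i + t) mod length w) mod length w = ((r + i) mod length w + t) mod length w"
    by (simp add: mod_add_left_eq mod_add_right_eq add.assoc)
  moreover have "(i + t) mod length w < length w"
    using assms by (rule mod_length_less)
  ultimately show "map (\<lambda>t. rotate r w ! ((i + t) mod length (rotate r w))) [0..<j] ! t =
      map (\<lambda>t. w ! (((r + i) mod length w + t) mod length w)) [0..<j] ! t"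
    using \<open>t < _\<close> by (simp add: nth_rotate)
qed simp

lemma match_len_rotate:
  "i < length w \<Longrightarrow> match_len (rotate r w) i = match_len w ((r + i) mod length w)"
  unfolding match_len_def by (simp add: cyc_rotate)

lemma match_pos_rotate:
  assumes "i < length w" and "0 < match_len (rotate r w) i"
  shows "match_pos w ((r + i) mod length w) = (r + match_pos (rotate r w) i) mod length w"
proof -
  obtain k where "match_len (rotate r w) i = Suc k"
    using assms(2) gr0_implies_Suc by blast
  then show ?thesis
    using match_len_rotate[OF assms(1), of r]
    by (simp add: match_pos_def mod_add_left_eq mod_add_right_eq add.assoc)
qed

text \<open>The hypothesis that every \<open>1\<close> has a partner rules out the junk value \<open>0\<close> that
  \<open>match_len\<close> takes when no balanced cyclic substring exists.\<close>

lemma matched_rotate: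
  assumes matches: "\<And>i. i < length w \<Longrightarrow> w ! i \<Longrightarrow> 0 < match_len w i"
    and q: "q < length w"
  shows "q \<in> matched (rotate r w) \<longleftrightarrow> (r + q) mod length w \<in> matched w"
proof -
  let ?n = "length w" and ?z = "rotate r w"
  have mod_less: "(r + i) mod ?n < ?n" for i
    using q by (rule mod_length_less)
  have z_matches: "0 < match_len ?z i" if "i < ?n" "?z ! i" for i
    using that matches[OF mod_less] match_len_rotate by (simp add: nth_rotate)
  have "(\<exists>i<?n. ?z ! i \<and> q = match_pos ?z i) \<longleftrightarrow>
      (\<exists>i'<?n. w ! i' \<and> (r + q) mod ?n = match_pos w i')"
  proof
    assume "\<exists>i<?n. ?z ! i \<and> q = match_pos ?z i"
    then obtain i where "i < ?n" "?z ! i" "q = match_pos ?z i"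
      by blast
    then show "\<exists>i'<?n. w ! i' \<and> (r + q) mod ?n = match_pos w i'"
      using match_pos_rotate z_matches mod_less by (intro exI[of _ "(r + i) mod ?n"]) (auto simp: nth_rotate)
  next
    assume "\<exists>i'<?n. w ! i' \<and> (r + q) mod ?n = match_pos w i'"
    then obtain i' where i': "i' < ?n" "w ! i'" "(r + q) mod ?n = match_pos w i'"
      by blast
    obtain i where i: "i < ?n" "(r + i) mod ?n = i'"
      using mod_add_left_surj[OF i'(1)] by blast
    then have "?z ! i" "(r + q) mod ?n = (r + match_pos ?z i) mod ?n"
      using i' match_pos_rotate z_matches by (auto simp: nth_rotate)
    moreover have "match_pos ?z i < ?n"
      unfolding match_pos_def length_rotate using q by (intro mod_less_divisor) linarith
    ultimately show "\<exists>i<?n. ?z ! i \<and> q = match_pos ?z i"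
      using i q mod_add_left_inj by blast
  qed
  then show ?thesis
    using q mod_less[of q] by (auto simp: matched_def nth_rotate)
qed

lemma f_rotate:
  assumes "\<And>i. i < length w \<Longrightarrow> w ! i \<Longrightarrow> 0 < match_len w i"
  shows "f (rotate r w) = rotate r (f w)"
  by (rule nth_equalityI) (auto simp: f_def nth_rotate matched_rotate[OF assms] mod_length_less)

lemma marks_rotate:
  assumes "\<And>i. i < length w \<Longrightarrow> w ! i \<Longrightarrow> 0 < match_len w i"
  shows "marks (rotate r w) = rotate r (marks w)"
  by (rule nth_equalityI) (auto simp: nth_rotate matched_rotate[OF assms] mod_length_less)

lemma runs_append_unmarked: "runs (xs @ (b, False) # ys) acc = runs xs acc @ runs ys []"
proof (induction xs arbitrary: acc)
  case (Cons x xs)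
  then show ?case
    by (cases x) auto
qed simp

lemma runs_marked:
  "runs (map (\<lambda>b. (b, True)) D) acc = (if D = [] \<and> acc = [] then [] else [rev acc @ D])"
  by (induction D arbitrary: acc) auto

abbreviation Wruns :: "(bool \<times> bool) list \<Rightarrow> nat multiset" where
  "Wruns L \<equiv> Wds (runs L [])"

lemma Wruns_append_unmarked: "Wruns (xs @ (b, False) # ys) = Wruns xs + Wruns ys"
  by (simp add: runs_append_unmarked)

lemma Wruns_marked_blocks: "Wruns (marked_blocks Ds) = Wds Ds"
  by (induction Ds) (simp_all add: runs_append_unmarked runs_marked)

text \<open>Cutting a cyclic marked string at any unmarked position yields the same runs, so the
  choice of the least unmatched position in \<open>blocks\<close> is immaterial.\<close>

lemma Wruns_rotate:
  assumes "L \<noteq> []" "\<not> snd (last L)" "p < length L" "\<not> snd (L ! p)"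
  shows "Wruns (rotate p L) = Wruns L"
proof -
  let ?X = "take p L" and ?Y = "drop (Suc p) L"
  obtain b where Lp: "L ! p = (b, False)"
    using assms(4) by (cases "L ! p") auto
  have L: "L = ?X @ (b, False) # ?Y"
    using id_take_nth_drop[OF assms(3)] Lp by simp
  have rot: "rotate p L = (b, False) # ?Y @ ?X"
    using assms(3) Lp by (simp add: rotate_drop_take Cons_nth_drop_Suc[OF assms(3), symmetric])
  have "Wruns (?Y @ ?X) = Wruns ?Y + Wruns ?X"
  proof (cases "?Y = []")
    case False
    then obtain c where "last ?Y = (c, False)"
      using assms(2) by (cases "last ?Y") (auto simp: last_drop)
    then have Y: "?Y = butlast ?Y @ [(c, False)]"
      using False append_butlast_last_id[of ?Y] by simp
    have "Wruns (?Y @ ?X) = Wruns (butlast ?Y @ (c, False) # ?X)"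
      by (subst Y) simp
    moreover have "Wruns ?Y = Wruns (butlast ?Y @ (c, False) # [])"
      by (subst Y) simp
    ultimately show ?thesis
      by (simp only: Wruns_append_unmarked) simp
  qed simp
  then show ?thesis
    using Wruns_append_unmarked[of "[]" b "?Y @ ?X"] Wruns_append_unmarked[of ?X b ?Y]
    by (simp only: rot L[symmetric]) (simp add: add.commute)
qed

lemma W_rotate_join_blocks:
  assumes "\<forall>D\<in>set Ds. dyck D" and "Ds \<noteq> []"
  shows "W (rotate r (join_blocks Ds)) = Wds Ds"
proof -
  let ?z = "rotate r (join_blocks Ds)" and ?G = "marked_blocks Ds"
  have marks_z: "marks ?z = rotate r ?G"
    using marks_rotate[OF match_len_join_blocks[OF assms(1)]] marks_join_blocks[OF assms(1)] by simp
  have last_G: "last ?G = (False, False)"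
    using last_marked_blocks[OF assms(2)] .
  then have "(False, False) \<in> set (marks ?z)"
    using marks_z assms(2) by (simp add: marked_blocks_def)
  then obtain i where "i < length ?z" "i \<notin> matched ?z"
    by (auto simp: in_set_conv_nth)
  define u where "u = (LEAST i. i < length ?z \<and> i \<notin> matched ?z)"
  have u: "u < length ?z" "u \<notin> matched ?z"
    unfolding u_def using LeastI[of "\<lambda>i. i < length ?z \<and> i \<notin> matched ?z"] \<open>i < _\<close> \<open>i \<notin> _\<close>
    by blast+
  have len: "length ?G = length ?z"
    using arg_cong[OF marks_z, of length] by simp
  have "blocks ?z = runs (rotate u (rotate r ?G)) []"
    unfolding blocks_def u_def[symmetric] marks_z by simp
  also have "rotate u (rotate r ?G) = rotate ((r + u) mod length ?G) ?G"
    by (simp add: rotate_rotate add.commute) (rule rotate_conv_mod)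
  finally have "W ?z = Wruns (rotate ((r + u) mod length ?G) ?G)"
    by (simp add: W_def)
  also have "\<dots> = Wruns ?G"
  proof (rule Wruns_rotate)
    show "?G \<noteq> []" "\<not> snd (last ?G)"
      using last_G assms(2) by (auto simp: marked_blocks_def)
    show "(r + u) mod length ?G < length ?G"
      using u(1) len by (simp add: mod_length_less)
    have "rotate r ?G ! u = marks ?z ! u"
      using marks_z by simp
    then show "\<not> snd (?G ! ((r + u) mod length ?G))"
      using u len by (simp add: nth_rotate)
  qed
  finally show ?thesis
    by (simp add: Wruns_marked_blocks)
qed

subsection \<open>The cycle lemma\<close>

lemma height_rotate:
  assumes "s < length u" "t \<le> length u"
  shows "height (rotate s u) t =
    (if s + t \<le> length u then height u (s + t) - height u s
     else bal u - height u s + height u (s + t - length u))"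
proof -
  have "bal (drop s u) = bal u - height u s"
    using height_drop[of s u "length u - s"] assms(1) by (simp add: height_ge_length)
  then show ?thesis
    using assms by (simp add: rotate_drop_take height_append height_drop height_take)
      (auto simp: add.commute)
qed

lemma exists_rotate_strict_min:
  assumes "2 * ones u < length u"
  shows "\<exists>s. ends_at_strict_min (rotate s u)"
proof -
  let ?n = "length u"
  have n: "0 < ?n" and bal_neg: "bal u < 0"
    using assms bal_eq_count[of u] count_True_add_count_False[of u] by linarith+
  define s where "s = (LEAST s. s < ?n \<and> (\<forall>t<?n. height u s \<le> height u t))"
  have "\<exists>s<?n. \<forall>t<?n. height u s \<le> height u t"
    using n Min_in[of "height u ` {..<?n}"] Min_le[of "height u ` {..<?n}"] by fastforce
  then have "s < ?n \<and> (\<forall>t<?n. height u s \<le> height u t)"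
    unfolding s_def by (rule LeastI_ex)
  then have s: "s < ?n" and min: "\<And>t. t < ?n \<Longrightarrow> height u s \<le> height u t"
    by blast+
  have first: "height u s < height u t" if "t < s" for t
    using not_less_Least[of t] that s min unfolding s_def by fastforce
  have "bal u < height (rotate s u) t" if "t < ?n" for t
  proof (cases "s + t \<le> ?n")
    case True
    then show ?thesis
      using s that min[of "s + t"] bal_neg first[of 0] height_ge_length[of u "s + t"]
      by (cases "s + t < ?n") (auto simp: height_rotate)
  next
    case False
    then show ?thesis
      using s that first[of "s + t - ?n"] by (simp add: height_rotate)
  qed
  then have "ends_at_strict_min (rotate s u)"
    by (simp add: ends_at_strict_min_def height_ge_length bal_rotate)
  then show ?thesis ..
qed

lemma strict_min_first_block:
  assumes K: "ends_at_strict_min z" and "z \<noteq> []"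
  shows "\<exists>D z'. dyck D \<and> z = D @ False # z' \<and> (z' \<noteq> [] \<longrightarrow> ends_at_strict_min z')"
proof -
  let ?n = "length z"
  have "height z (Suc (?n - 1)) < 0"
    using K assms(2) unfolding ends_at_strict_min_def by (cases z) auto
  define j where "j = (LEAST j. height z (Suc j) < 0)"
  have neg: "height z (Suc j) < 0" and "j \<le> ?n - 1"
    unfolding j_def using \<open>height z (Suc (?n - 1)) < 0\<close> by (rule LeastI, rule Least_le)
  then have j: "j < ?n"
    using assms(2) by (cases z) auto
  have nonneg: "0 \<le> height z t" if "t \<le> j" for t
    using not_less_Least[of "t - 1" "\<lambda>j. height z (Suc j) < 0"] that unfolding j_def
    by (cases t) auto
  have "height z j = 0" and "\<not> z ! j"
    using nonneg[of j] neg height_Suc[OF j] by (auto split: if_splits)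
  define D where "D = take j z"
  define z' where "z' = drop (Suc j) z"
  have z: "z = D @ False # z'"
    unfolding D_def z'_def using id_take_nth_drop[OF j] \<open>\<not> z ! j\<close> by simp
  have D: "dyck D"
    using \<open>height z j = 0\<close> nonneg unfolding D_def dyck_def height_def by (simp add: min_def)
  have "ends_at_strict_min z'"
  proof (unfold ends_at_strict_min_def, intro allI impI)
    fix t assume "t < length z'"
    then have "height z ?n < height z (Suc (length D) + t)"
      using K z by (simp add: ends_at_strict_min_def)
    then show "height z' (length z') < height z' t"
      using D z by (simp add: height_block_Cons)
  qed
  then show ?thesis
    using D z by blast
qed

lemma strict_min_join_blocks_decomp:
  "ends_at_strict_min z \<Longrightarrow> z \<noteq> [] \<Longrightarrow> \<exists>Ds. Ds \<noteq> [] \<and> (\<forall>D\<in>set Ds. dyck D) \<and> z = join_blocks Ds"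
proof (induction "length z" arbitrary: z rule: less_induct)
  case less
  obtain D z' where D: "dyck D" "z = D @ False # z'" and z': "z' \<noteq> [] \<longrightarrow> ends_at_strict_min z'"
    using strict_min_first_block[OF less.prems] by blast
  show ?case
  proof (cases "z' = []")
    case True
    then show ?thesis
      using D by (intro exI[of _ "[D]"]) simp
  next
    case False
    then obtain Ds where "Ds \<noteq> []" "\<forall>D\<in>set Ds. dyck D" "z' = join_blocks Ds"
      using less.hyps[of z'] z' D(2) by auto
    then show ?thesis
      using D by (intro exI[of _ "D # Ds"]) simp
  qed
qed

lemma exists_rotate_join_blocks:
  assumes "2 * ones u < length u"
  shows "\<exists>r Ds. Ds \<noteq> [] \<and> (\<forall>D\<in>set Ds. dyck D) \<and> u = rotate r (join_blocks Ds)"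
proof -
  obtain s where "ends_at_strict_min (rotate s u)"
    using exists_rotate_strict_min[OF assms] by blast
  moreover have "rotate s u \<noteq> []"
    using assms by auto
  ultimately obtain Ds where "Ds \<noteq> []" "\<forall>D\<in>set Ds. dyck D" "rotate s u = join_blocks Ds"
    using strict_min_join_blocks_decomp by blast
  moreover obtain r where "u = rotate r (rotate s u)"
    using rotate_inverse by blast
  ultimately show ?thesis
    by auto
qed

lemma length_f [simp]: "length (f x) = length x"
  by (simp add: f_def)

lemma W_f_and_ones_f:
  assumes "2 * ones x < length x"
  shows "W (f x) = W x" and "ones (f x) = ones x"
proof -
  obtain r Ds where Ds: "Ds \<noteq> []" "\<forall>D\<in>set Ds. dyck D" and x: "x = rotate r (join_blocks Ds)"
    using exists_rotate_join_blocks[OF assms] by blast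
  have fx: "f x = rotate r (join_blocks (map (map Not) Ds))"
    using f_rotate[OF match_len_join_blocks[OF Ds(2)]] f_join_blocks[OF Ds(2)] x by simp
  show ones: "ones (f x) = ones x"
    using fx x ones_join_blocks_compl[OF Ds(2)] by (simp add: count_list_rotate)
  then obtain s Es where Es: "Es \<noteq> []" "\<forall>E\<in>set Es. dyck E" and fx': "f x = rotate s (join_blocks Es)"
    using exists_rotate_join_blocks[of "f x"] assms by auto
  obtain t where "join_blocks Es = rotate t (f x)"
    using rotate_inverse[of "join_blocks Es" s] fx' by auto
  then have "join_blocks Es = rotate (t + r) (join_blocks (map (map Not) Ds))"
    by (simp add: fx rotate_rotate)
  then have "Wds Es = Wds Ds"
    using Wds_compl_rotation Ds Es by blast
  then show "W (f x) = W x"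
    using W_rotate_join_blocks Ds Es fx' x by simp
qed

theorem mainTheorem9:
  fixes n k :: nat and x :: "bool list"
  assumes "k \<ge> 1" and "n \<ge> 2 * k + 1" and "x \<in> bin_strings n k"
  shows "W (f x) = W x \<and> (\<forall>m. W ((f ^^ m) x) = W x)"
proof -
  have x: "length x = n" "ones x = k"
    using assms(3) by (auto simp: bin_strings_def)
  have orbit: "W ((f ^^ m) x) = W x \<and> length ((f ^^ m) x) = n \<and> ones ((f ^^ m) x) = k" for m
  proof (induction m)
    case (Suc m)
    then have "2 * ones ((f ^^ m) x) < length ((f ^^ m) x)"
      using assms(2) by simp
    then show ?case
      using Suc W_f_and_ones_f by simp
  qed (use x in simp)
  show ?thesis
    using orbit[of 1] orbit by simp
qed

end
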